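(* Let $\Omega\subset\mathbb R^d$ be bounded, $X=H=L^2(\Omega)$, $T=\mathrm{Id}$, and $J=S|_{L^2(\Omega)}$ the negative Boltzmann–Shannon entropy restricted to $L^2(\Omega)$. Let $(\lambda_n)_{n\ge0}$ be an increasing sequence of positive numbers and let $x^\dagger\in L^2(\Omega)$ satisfy $0\le x^\dagger(t)<1/e$ for all $t$ in a set $E\subset\Omega$ of positive measure. Let $x_n$ be the MHDM iterates with data $f=x^\dagger$ and penalty $S$. Then for almost every $t\in E$ and all $n\in\mathbb N$, $$x_n(t)>x_{n-1}(t)>\dots>x_0(t)>x^\dagger(t).$$
   Context: $S(x)=\int_\Omega x\log x\,dt$ if $x\ge0$ a.e. and $x\log x\in L^1(\Omega)$, $S(x)=\infty$ otherwise ($0\log0=0$). MHDM with $T=\mathrm{Id}$: $u_0=\arg\min_u\frac{\lambda_0}{2}\|u-x^\dagger\|_{L^2}^2+S(u)$, $x_0=u_0$; for $n\ge1$, $u_n=\arg\min_u\frac{\lambda_n}{2}\|x^\dagger-x_{n-1}-u\|_{L^2}^2+S(u)$, $x_n=x_{n-1}+u_n$ (the minimizers are unique). *)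

theory Defs
  imports "HOL-Analysis.Analysis"
begin

definition L2 :: "'a measure \<Rightarrow> ('a \<Rightarrow> real) set" where
  "L2 M = {u. u \<in> borel_measurable M \<and> integrable M (\<lambda>t. (u t)\<^sup>2)}"

text \<open>Negative Boltzmann--Shannon entropy S (with 0 log 0 = 0), value in extended reals.\<close>
definition entropyS :: "'a measure \<Rightarrow> ('a \<Rightarrow> real) \<Rightarrow> ereal" where
  "entropyS M u =
     (if (AE t in M. 0 \<le> u t) \<and> integrable M (\<lambda>t. u t * ln (u t))
      then ereal (\<integral>t. u t * ln (u t) \<partial>M) else \<infinity>)"

definition is_minimizer_L2 :: "'a measure \<Rightarrow> (('a \<Rightarrow> real) \<Rightarrow> ereal) \<Rightarrow> ('a \<Rightarrow> real) \<Rightarrow> bool" where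
  "is_minimizer_L2 M F u \<longleftrightarrow> u \<in> L2 M \<and> (\<forall>v\<in>L2 M. F u \<le> F v)"

definition MHDM_iterates ::
  "'a measure \<Rightarrow> (nat \<Rightarrow> real) \<Rightarrow> ('a \<Rightarrow> real) \<Rightarrow> (nat \<Rightarrow> 'a \<Rightarrow> real) \<Rightarrow> bool" where
  "MHDM_iterates M lam f x \<longleftrightarrow>
     is_minimizer_L2 M
       (\<lambda>u. ereal (lam 0 / 2 * (\<integral>t. (u t - f t)\<^sup>2 \<partial>M)) + entropyS M u) (x 0)
   \<and> (\<forall>n. is_minimizer_L2 M
       (\<lambda>u. ereal (lam (Suc n) / 2 * (\<integral>t. (f t - x n t - u t)\<^sup>2 \<partial>M)) + entropyS M u)
       (\<lambda>t. x (Suc n) t - x n t))"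

end

theory Submission
  imports Defs
begin

text \<open>Each MHDM step minimizes \<open>u \<mapsto> \<lambda>/2 \<parallel>g - u\<parallel>\<^sup>2 + S(u)\<close> over \<open>L\<^sup>2\<close>: the first one
  with \<open>g = x\<^sup>\<dagger>\<close>, giving \<open>x\<^sub>0\<close>, and the step from \<open>x\<^sub>n\<close> with \<open>g = x\<^sup>\<dagger> - x\<^sub>n\<close>, giving the
  increment \<open>x\<^sub>n\<^sub>+\<^sub>1 - x\<^sub>n\<close>. So it suffices that every such minimizer satisfies \<open>u > 0\<close> a.e.
  and \<open>u > g\<close> a.e. on \<open>{g < 1/e}\<close>. Both follow by perturbation: raising \<open>u\<close> by a constant
  \<open>\<epsilon>\<close> on a set where the pointwise energy \<open>\<lambda>/2 (g - b)\<^sup>2 + b log b\<close> strictly decreases at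
  \<open>b = u\<close> lowers the functional, so such a set is null. The slope \<open>\<lambda>(b - g) + log b + 1\<close> of
  the energy tends to \<open>-\<infinity>\<close> as \<open>b \<rightarrow> 0\<close> and is negative whenever \<open>0 \<le> b \<le> g < 1/e\<close>.\<close>

lemma square_diff_le: "(a - b)^2 \<le> 2 * a^2 + 2 * (b::real)^2"
proof -
  have "0 \<le> (a + b)^2" by simp
  then show ?thesis by (simp add: power2_eq_square algebra_simps)
qed

lemma integrable_square_diff_L2:
  assumes "f \<in> L2 M" "g \<in> L2 M"
  shows "integrable M (\<lambda>t. (f t - g t)^2)"
proof (rule Bochner_Integration.integrable_bound)
  show "integrable M (\<lambda>t. 2 * (f t)^2 + 2 * (g t)^2)"
    using assms by (auto simp: L2_def)
  show "(\<lambda>t. (f t - g t)^2) \<in> borel_measurable M"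
    using assms by (auto simp: L2_def)
  show "AE t in M. norm ((f t - g t)^2) \<le> norm (2 * (f t)^2 + 2 * (g t)^2)"
    using square_diff_le by auto
qed

lemma L2_diff: "f \<in> L2 M \<Longrightarrow> g \<in> L2 M \<Longrightarrow> (\<lambda>t. f t - g t) \<in> L2 M"
  using integrable_square_diff_L2 by (auto simp: L2_def)

lemma L2_add:
  assumes "f \<in> L2 M" "g \<in> L2 M"
  shows "(\<lambda>t. f t + g t) \<in> L2 M"
proof -
  have "(\<lambda>t. - g t) \<in> L2 M" using assms(2) by (simp add: L2_def)
  from L2_diff[OF assms(1) this] show ?thesis by simp
qed

lemma L2_bounded:
  assumes "finite_measure M" "f \<in> borel_measurable M" "\<And>t. t \<in> space M \<Longrightarrow> \<bar>f t\<bar> \<le> C"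
  shows "f \<in> L2 M"
proof -
  have "(f t)^2 \<le> C^2" if "t \<in> space M" for t
    using assms(3)[OF that] by (metis abs_ge_zero power2_abs power_mono)
  then have "AE t in M. norm ((f t)^2) \<le> C^2"
    by auto
  with assms(1,2) have "integrable M (\<lambda>t. (f t)^2)"
    by (intro finite_measure.integrable_const_bound) auto
  with assms(2) show ?thesis by (simp add: L2_def)
qed

lemma mult_ln_diff_le:
  assumes "0 \<le> (a::real)" "0 < b"
  shows "b * ln b - a * ln a \<le> (b - a) * (ln b + 1)"
proof (cases "a = 0")
  case False
  with assms have "0 < a" by simp
  with assms have "ln b - ln a \<le> b / a - 1"
    using ln_le_minus_one[of "b / a"] by (simp add: ln_div)
  with \<open>0 < a\<close> have "a * (ln b - ln a) \<le> b - a"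
    by (simp add: field_simps)
  then show ?thesis by (simp add: algebra_simps)
qed (use assms in \<open>simp add: algebra_simps\<close>)

lemma abs_mult_ln_le:
  assumes "0 \<le> (s::real)"
  shows "\<bar>s * ln s\<bar> \<le> s^2 + 1"
proof (cases "s = 0")
  case False
  with assms have "0 < s" by simp
  have "s * ln s \<le> s^2"
    unfolding power2_eq_square using \<open>0 < s\<close> ln_le_minus_one[of s]
    by (intro mult_left_mono) auto
  moreover have "s - 1 \<le> s * ln s"
    using mult_ln_diff_le[of s 1] assms by simp
  moreover have "0 \<le> s^2" by simp
  ultimately show ?thesis
    using \<open>0 < s\<close> by linarith
qed simp

lemma
  assumes fin: "finite_measure M" and v: "v \<in> L2 M" and nonneg: "AE t in M. 0 \<le> v t"
  shows integrable_mult_ln_L2: "integrable M (\<lambda>t. v t * ln (v t))"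
    and entropyS_eq_integral: "entropyS M v = ereal (\<integral>t. v t * ln (v t) \<partial>M)"
proof -
  show "integrable M (\<lambda>t. v t * ln (v t))"
  proof (rule Bochner_Integration.integrable_bound)
    show "integrable M (\<lambda>t. (v t)^2 + 1)"
      using v fin by (auto simp: L2_def intro: finite_measure.integrable_const)
    have [measurable]: "v \<in> borel_measurable M" using v by (simp add: L2_def)
    show "(\<lambda>t. v t * ln (v t)) \<in> borel_measurable M" by measurable
    show "AE t in M. norm (v t * ln (v t)) \<le> norm ((v t)^2 + 1)"
      using nonneg by eventually_elim (simp add: abs_mult_ln_le)
  qed
  with nonneg show "entropyS M v = ereal (\<integral>t. v t * ln (v t) \<partial>M)"
    by (simp add: entropyS_def)
qed

definition tikhonov_entropy ::
  "'a measure \<Rightarrow> real \<Rightarrow> ('a \<Rightarrow> real) \<Rightarrow> ('a \<Rightarrow> real) \<Rightarrow> ereal" where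
  "tikhonov_entropy M lam g = (\<lambda>v. ereal (lam / 2 * (\<integral>t. (g t - v t)^2 \<partial>M)) + entropyS M v)"

definition energy_density :: "real \<Rightarrow> real \<Rightarrow> real \<Rightarrow> real" where
  "energy_density lam a b = lam / 2 * (a - b)^2 + b * ln b"

lemma
  assumes fin: "finite_measure M" and g: "g \<in> L2 M" and v: "v \<in> L2 M"
    and nonneg: "AE t in M. 0 \<le> v t"
  shows integrable_energy_density: "integrable M (\<lambda>t. energy_density lam (g t) (v t))"
    and tikhonov_entropy_eq_integral:
      "tikhonov_entropy M lam g v = ereal (\<integral>t. energy_density lam (g t) (v t) \<partial>M)"
proof -
  have sq: "integrable M (\<lambda>t. (g t - v t)^2)"
    using g v by (rule integrable_square_diff_L2)
  note ent = integrable_mult_ln_L2[OF fin v nonneg] entropyS_eq_integral[OF fin v nonneg]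
  show "integrable M (\<lambda>t. energy_density lam (g t) (v t))"
    unfolding energy_density_def using sq ent by simp
  show "tikhonov_entropy M lam g v = ereal (\<integral>t. energy_density lam (g t) (v t) \<partial>M)"
    unfolding energy_density_def tikhonov_entropy_def using sq ent by simp
qed

lemma tikhonov_entropy_minimizer_nonneg:
  assumes fin: "finite_measure M" and min: "is_minimizer_L2 M (tikhonov_entropy M lam g) u"
  shows "AE t in M. 0 \<le> u t"
proof (rule ccontr)
  assume "\<not> (AE t in M. 0 \<le> u t)"
  then have "tikhonov_entropy M lam g u = \<infinity>"
    by (simp add: tikhonov_entropy_def entropyS_def)
  moreover have "(\<lambda>_. 1) \<in> L2 M"
    using fin by (intro L2_bounded[where C=1]) auto
  then have "tikhonov_entropy M lam g u \<le> tikhonov_entropy M lam g (\<lambda>_. 1)"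
    using min by (simp add: is_minimizer_L2_def)
  ultimately show False
    by (simp add: tikhonov_entropy_def entropyS_def)
qed

lemma tikhonov_entropy_minimizer_no_descent:
  assumes fin: "finite_measure M" and g: "g \<in> L2 M"
    and min: "is_minimizer_L2 M (tikhonov_entropy M lam g) u"
    and A: "A \<in> sets M" and "0 < \<epsilon>"
    and descent: "\<And>t. t \<in> A \<Longrightarrow>
      energy_density lam (g t) (u t + \<epsilon>) < energy_density lam (g t) (u t)"
  shows "A \<in> null_sets M"
proof (rule ccontr)
  assume "A \<notin> null_sets M"
  with A have A_pos: "emeasure M A \<noteq> 0" by auto
  define v where "v t = u t + \<epsilon> * indicator A t" for t
  have u: "u \<in> L2 M" using min by (simp add: is_minimizer_L2_def)
  have u_nonneg: "AE t in M. 0 \<le> u t"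
    using fin min by (rule tikhonov_entropy_minimizer_nonneg)
  have "(\<lambda>t. \<epsilon> * indicator A t) \<in> L2 M"
    using fin A \<open>0 < \<epsilon>\<close> by (intro L2_bounded[where C=\<epsilon>]) (auto simp: indicator_def)
  with u have v: "v \<in> L2 M"
    unfolding v_def by (rule L2_add)
  have v_nonneg: "AE t in M. 0 \<le> v t"
    using u_nonneg by eventually_elim (use \<open>0 < \<epsilon>\<close> in \<open>simp add: v_def\<close>)
  have le: "energy_density lam (g t) (v t) \<le> energy_density lam (g t) (u t)" for t
    using descent[of t] by (cases "t \<in> A") (auto simp: v_def)
  have "(\<integral>t. energy_density lam (g t) (v t) \<partial>M) < (\<integral>t. energy_density lam (g t) (u t) \<partial>M)"
  proof (rule finite_measure.integral_less_AE[OF fin _ _ A_pos A])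
    show "integrable M (\<lambda>t. energy_density lam (g t) (v t))"
      using fin g v v_nonneg by (rule integrable_energy_density)
    show "integrable M (\<lambda>t. energy_density lam (g t) (u t))"
      using fin g u u_nonneg by (rule integrable_energy_density)
    show "AE t in M. t \<in> A \<longrightarrow>
        energy_density lam (g t) (v t) \<noteq> energy_density lam (g t) (u t)"
      using descent by (intro AE_I2) (fastforce simp: v_def)
  qed (use le in simp)
  then have "tikhonov_entropy M lam g v < tikhonov_entropy M lam g u"
    using tikhonov_entropy_eq_integral[OF fin g v v_nonneg]
      tikhonov_entropy_eq_integral[OF fin g u u_nonneg] by simp
  with min v show False
    by (auto simp: is_minimizer_L2_def not_less[symmetric])
qed

lemma energy_density_descent:
  assumes "0 \<le> b" "0 < \<delta>" and slope: "lam * (b - a) + lam * \<delta> / 2 + ln (b + \<delta>) + 1 < 0"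
  shows "energy_density lam a (b + \<delta>) < energy_density lam a b"
proof -
  have "(b + \<delta>) * ln (b + \<delta>) - b * ln b \<le> \<delta> * (ln (b + \<delta>) + 1)"
    using mult_ln_diff_le[of b "b + \<delta>"] assms(1,2) by simp
  moreover have "lam / 2 * (a - (b + \<delta>))^2 - lam / 2 * (a - b)^2 = \<delta> * (lam * (b - a) + lam * \<delta> / 2)"
    by (simp add: power2_eq_square algebra_simps)
  moreover have "\<delta> * (lam * (b - a) + lam * \<delta> / 2 + ln (b + \<delta>) + 1) < 0"
    using \<open>0 < \<delta>\<close> slope by (simp add: mult_pos_neg)
  ultimately show ?thesis
    unfolding energy_density_def by (simp add: algebra_simps)
qed

lemma energy_density_descent_at_zero:
  assumes "0 < lam" "- a \<le> K" "0 \<le> K"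
  shows "energy_density lam a (exp (- (lam * K) - lam - 1)) < energy_density lam a 0"
proof -
  define \<delta> where "\<delta> = exp (- (lam * K) - lam - 1)"
  have "0 \<le> lam * K" using assms by simp
  then have "- (lam * K) - lam - 1 \<le> 0" using \<open>0 < lam\<close> by linarith
  then have "\<delta> \<le> 1" by (simp add: \<delta>_def)
  then have "lam * \<delta> \<le> lam" using \<open>0 < lam\<close> by simp
  moreover have "lam * (- a) \<le> lam * K"
    using assms by (intro mult_left_mono) auto
  moreover have "ln \<delta> = - (lam * K) - lam - 1" by (simp add: \<delta>_def)
  ultimately have "lam * (- a) + lam * \<delta> / 2 + ln \<delta> + 1 < 0"
    using \<open>0 < lam\<close> by linarith
  then show ?thesis
    using energy_density_descent[of 0 \<delta>] by (simp add: \<delta>_def)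
qed

lemma tikhonov_entropy_minimizer_pos:
  assumes fin: "finite_measure M" and "0 < lam" and g: "g \<in> L2 M"
    and min: "is_minimizer_L2 M (tikhonov_entropy M lam g) u"
  shows "AE t in M. 0 < u t"
proof -
  have [measurable]: "u \<in> borel_measurable M" "g \<in> borel_measurable M"
    using g min by (auto simp: is_minimizer_L2_def L2_def)
  define Z where "Z k = {t \<in> space M. u t = 0 \<and> \<bar>g t\<bar> \<le> real k}" for k :: nat
  have "Z k \<in> null_sets M" for k
  proof (rule tikhonov_entropy_minimizer_no_descent[OF fin g min _ exp_gt_zero])
    show "Z k \<in> sets M" unfolding Z_def by measurable
  next
    fix t assume "t \<in> Z k"
    then have "u t = 0" "- g t \<le> real k" by (auto simp: Z_def)
    then show "energy_density lam (g t) (u t + exp (- (lam * real k) - lam - 1))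
        < energy_density lam (g t) (u t)"
      using energy_density_descent_at_zero[OF \<open>0 < lam\<close>] by simp
  qed
  then have "AE t in M. \<forall>k. t \<notin> Z k"
    by (simp add: AE_all_countable AE_not_in)
  moreover have "AE t in M. 0 \<le> u t"
    using fin min by (rule tikhonov_entropy_minimizer_nonneg)
  moreover have "AE t in M. t \<in> space M" by (rule AE_space)
  ultimately show ?thesis
  proof eventually_elim
    case (elim t)
    have "t \<notin> Z (nat \<lceil>\<bar>g t\<bar>\<rceil>)" using elim by blast
    with elim show "0 < u t"
      using real_nat_ceiling_ge[of "\<bar>g t\<bar>"] by (auto simp: Z_def)
  qed
qed

lemma energy_density_descent_le_data:
  assumes "0 \<le> lam" "0 \<le> b" "b \<le> a" "0 < \<delta>" and slope: "lam * \<delta> / 2 + ln (a + \<delta>) + 1 < 0"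
  shows "energy_density lam a (b + \<delta>) < energy_density lam a b"
proof (rule energy_density_descent)
  have "ln (b + \<delta>) \<le> ln (a + \<delta>)" using assms by simp
  moreover have "lam * (b - a) \<le> 0" using assms by (simp add: mult_nonneg_nonpos)
  ultimately show "lam * (b - a) + lam * \<delta> / 2 + ln (b + \<delta>) + 1 < 0" using slope by linarith
qed (use assms in auto)

lemma uniform_slope_below_inv_e:
  assumes "0 < (lam::real)" "0 < d" "2 * d \<le> exp (-1)"
  shows "\<exists>\<delta>>0. \<forall>a. 0 \<le> a \<longrightarrow> a + 2 * d \<le> exp (-1) \<longrightarrow> lam * \<delta> / 2 + ln (a + \<delta>) + 1 < 0"
proof -
  define c where "c = - 1 - ln (exp (-1) - d)"
  have "0 < c"
    using assms ln_less_cancel_iff[of "exp (-1) - d" "exp (-1)"] by (simp add: c_def)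
  define \<delta> where "\<delta> = min d (c / lam)"
  have "0 < \<delta>" "\<delta> \<le> d"
    using assms \<open>0 < c\<close> by (simp_all add: \<delta>_def)
  have "lam * \<delta> \<le> c"
    using \<open>0 < lam\<close> mult_left_mono[of \<delta> "c / lam" lam] by (simp add: \<delta>_def)
  have "lam * \<delta> / 2 + ln (a + \<delta>) + 1 < 0" if "0 \<le> a" "a + 2 * d \<le> exp (-1)" for a
  proof -
    have "ln (a + \<delta>) \<le> ln (exp (-1) - d)"
      using that \<open>0 < \<delta>\<close> \<open>\<delta> \<le> d\<close> by simp
    then show ?thesis
      using \<open>lam * \<delta> \<le> c\<close> \<open>0 < c\<close> by (simp add: c_def)
  qed
  with \<open>0 < \<delta>\<close> show ?thesis by blast
qed

lemma tikhonov_entropy_minimizer_gt_data: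
  assumes fin: "finite_measure M" and "0 < lam" and g: "g \<in> L2 M"
    and min: "is_minimizer_L2 M (tikhonov_entropy M lam g) u"
  shows "AE t in M. g t < exp (-1) \<longrightarrow> g t < u t"
proof -
  have [measurable]: "u \<in> borel_measurable M" "g \<in> borel_measurable M"
    using g min by (auto simp: is_minimizer_L2_def L2_def)
  define d where "d k = exp (-1) * inverse (real (Suc k)) / 2" for k :: nat
  define C where "C k = {t \<in> space M. 0 \<le> u t \<and> u t \<le> g t \<and> g t + 2 * d k \<le> exp (-1)}"
    for k
  have "C k \<in> null_sets M" for k
  proof -
    have "inverse (real (Suc k)) \<le> 1" by (simp add: inverse_le_1_iff)
    then have "2 * d k \<le> exp (-1)" by (simp add: d_def)
    moreover have "0 < d k" by (simp add: d_def)
    ultimately obtain \<delta> where "0 < \<delta>"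
      and slope: "\<And>a. 0 \<le> a \<Longrightarrow> a + 2 * d k \<le> exp (-1) \<Longrightarrow> lam * \<delta> / 2 + ln (a + \<delta>) + 1 < 0"
      using uniform_slope_below_inv_e[OF \<open>0 < lam\<close>] by blast
    show ?thesis
    proof (rule tikhonov_entropy_minimizer_no_descent[OF fin g min _ \<open>0 < \<delta>\<close>])
      show "C k \<in> sets M" unfolding C_def by measurable
    next
      fix t assume "t \<in> C k"
      then show "energy_density lam (g t) (u t + \<delta>) < energy_density lam (g t) (u t)"
        using \<open>0 < lam\<close> \<open>0 < \<delta>\<close> slope[of "g t"]
        by (intro energy_density_descent_le_data) (auto simp: C_def)
    qed
  qed
  then have "AE t in M. \<forall>k. t \<notin> C k"
    by (simp add: AE_all_countable AE_not_in)
  moreover have "AE t in M. 0 \<le> u t"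
    using fin min by (rule tikhonov_entropy_minimizer_nonneg)
  moreover have "AE t in M. t \<in> space M" by (rule AE_space)
  ultimately show ?thesis
  proof eventually_elim
    case (elim t)
    show "g t < exp (-1) \<longrightarrow> g t < u t"
    proof (rule impI, rule ccontr)
      assume "g t < exp (-1)" "\<not> g t < u t"
      obtain k where "inverse (real (Suc k)) < (exp (-1) - g t) / exp (-1)"
        using reals_Archimedean[of "(exp (-1) - g t) / exp (-1)"] \<open>g t < exp (-1)\<close> by auto
      then have "g t + 2 * d k \<le> exp (-1)"
        by (simp add: d_def less_divide_eq mult.commute)
      moreover have "t \<notin> C k" using elim by blast
      ultimately show False
        using elim \<open>\<not> g t < u t\<close> by (simp add: C_def)
    qed
  qed
qed

theorem mainTheorem5:
  fixes \<Omega> E :: "'a::euclidean_space set"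
    and lam :: "nat \<Rightarrow> real"
    and xdag :: "'a \<Rightarrow> real"
    and x :: "nat \<Rightarrow> 'a \<Rightarrow> real"
  assumes "bounded \<Omega>" and "\<Omega> \<in> sets lebesgue"
    and "\<And>n. 0 < lam n" and "mono lam"
    and "xdag \<in> L2 (lebesgue_on \<Omega>)"
    and "E \<subseteq> \<Omega>" and "E \<in> sets lebesgue" and "emeasure lebesgue E > 0"
    and "\<And>t. t \<in> E \<Longrightarrow> 0 \<le> xdag t \<and> xdag t < exp (-1)"
    and "MHDM_iterates (lebesgue_on \<Omega>) lam xdag x"
  shows "AE t in lebesgue_on \<Omega>. t \<in> E \<longrightarrow>
           xdag t < x 0 t \<and> (\<forall>n. x n t < x (Suc n) t)"
proof -
  let ?M = "lebesgue_on \<Omega>"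
  have fin: "finite_measure ?M"
    using assms(1,2) by (intro finite_measure_lebesgue_on bounded_set_imp_lmeasurable)
  have min0: "is_minimizer_L2 ?M (tikhonov_entropy ?M (lam 0) xdag) (x 0)"
    and min_Suc: "\<And>n. is_minimizer_L2 ?M (tikhonov_entropy ?M (lam (Suc n)) (\<lambda>t. xdag t - x n t))
      (\<lambda>t. x (Suc n) t - x n t)"
    using assms(10) by (simp_all add: MHDM_iterates_def tikhonov_entropy_def power2_commute)
  have x_L2: "x n \<in> L2 ?M" for n
  proof (induction n)
    case (Suc n)
    have "(\<lambda>t. x (Suc n) t - x n t) \<in> L2 ?M"
      using min_Suc[of n] by (simp add: is_minimizer_L2_def)
    from L2_add[OF Suc this] show ?case by simp
  qed (use min0 in \<open>simp add: is_minimizer_L2_def\<close>)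
  have "AE t in ?M. xdag t < exp (-1) \<longrightarrow> xdag t < x 0 t"
    using fin assms(3) assms(5) min0 by (rule tikhonov_entropy_minimizer_gt_data)
  moreover have "AE t in ?M. 0 < x (Suc n) t - x n t" for n
    using fin assms(3) L2_diff[OF assms(5) x_L2] min_Suc by (rule tikhonov_entropy_minimizer_pos)
  then have "AE t in ?M. \<forall>n. x n t < x (Suc n) t"
    by (simp add: AE_all_countable)
  ultimately show ?thesis
    by eventually_elim (use assms(9) in auto)
qed

end
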